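(* Let $p$ be one of $(12,\{0,1\},\{0,1\})$, $(12,\{0,1\},\{0,2\})$, $(12,\{0,1\},\{1,2\})$, $(12,\{0,2\},\{0,2\})$, or any pattern in the same symmetry class as one of these. Then for all $n>1$, $a_n(p)=n!-(n-2)!$.
   Context: For $n\ge1$, $\mathcal S_n$ is the set of permutations $\pi=\pi_1\cdots\pi_n$ of $[n]$. A bi-vincular pattern of length $k$ is a triple $p=(\sigma,X,Y)$ with $\sigma\in\mathcal S_k$ and $X,Y\subseteq\{0,1,\dots,k\}$. A permutation $\pi\in\mathcal S_n$ contains $p$ if there are indices $1\le i_1<\dots<i_k\le n$ such that $(\pi_{i_1},\dots,\pi_{i_k})$ is order-isomorphic to $\sigma$ and, letting $j_1<\dots<j_k$ be the values $\pi_{i_1},\dots,\pi_{i_k}$ sorted increasingly and setting $i_0=j_0=0$, $i_{k+1}=j_{k+1}=n+1$, one has $i_{x+1}=i_x+1$ for all $x\in X$ and $j_{y+1}=j_y+1$ for all $y\in Y$. Otherwise $\pi$ avoids $p$; $a_n(p)$ is the number of $\pi\in\mathcal S_n$ avoiding $p$. Symmetries: $p^{i}=(\sigma^{-1},Y,X)$, $p^{r}=(\sigma^{r},\{k-x:x\in X\},Y)$, $p^{c}=(\sigma^{c},X,\{k-y:y\in Y\})$ with $\sigma^r_j=\sigma_{k+1-j}$, $\sigma^c_j=k+1-\sigma_j$; the symmetry class of $p$ consists of all patterns obtained from $p$ by finitely many applications of these maps. *)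

theory Defs
  imports Main
begin

text \<open>Permutations of [n] as lists of length n (one-line notation, 1-indexed entries
  pi_i = pi ! (i - 1)).\<close>
definition perms :: "nat \<Rightarrow> nat list set" where
  "perms n = {\<pi>. length \<pi> = n \<and> distinct \<pi> \<and> set \<pi> = {1..n}}"

type_synonym bvpattern = "nat list \<times> nat set \<times> nat set"

definition ext :: "nat \<Rightarrow> nat \<Rightarrow> (nat \<Rightarrow> nat) \<Rightarrow> nat \<Rightarrow> nat" where
  "ext k n f x = (if x = 0 then 0 else if x = k + 1 then n + 1 else f x)"

definition contains :: "nat list \<Rightarrow> bvpattern \<Rightarrow> bool" where
  "contains \<pi> p = (case p of (\<sigma>, X, Y) \<Rightarrow>
     (let k = length \<sigma>; n = length \<pi> in
      \<exists>i :: nat \<Rightarrow> nat.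
        (\<forall>a \<in> {1..k}. 1 \<le> i a \<and> i a \<le> n) \<and>
        (\<forall>a b. 1 \<le> a \<longrightarrow> a < b \<longrightarrow> b \<le> k \<longrightarrow> i a < i b) \<and>
        (\<forall>a \<in> {1..k}. \<forall>b \<in> {1..k}.
            (\<pi> ! (i a - 1) < \<pi> ! (i b - 1)) = (\<sigma> ! (a - 1) < \<sigma> ! (b - 1))) \<and>
        (let js = sort (map (\<lambda>a. \<pi> ! (i a - 1)) [1..<k+1]);
             j = (\<lambda>t. js ! (t - 1)) in
          (\<forall>x \<in> X. ext k n i (x + 1) = ext k n i x + 1) \<and>
          (\<forall>y \<in> Y. ext k n j (y + 1) = ext k n j y + 1))))"

definition avoiders :: "nat \<Rightarrow> bvpattern \<Rightarrow> nat" where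
  "avoiders n p = card {\<pi> \<in> perms n. \<not> contains \<pi> p}"

definition perm_inv :: "nat list \<Rightarrow> nat list" where
  "perm_inv \<sigma> = map (\<lambda>v. (LEAST a. a < length \<sigma> \<and> \<sigma> ! a = v) + 1) [1..<length \<sigma> + 1]"

definition pat_i :: "bvpattern \<Rightarrow> bvpattern" where
  "pat_i p = (case p of (\<sigma>, X, Y) \<Rightarrow> (perm_inv \<sigma>, Y, X))"

definition pat_r :: "bvpattern \<Rightarrow> bvpattern" where
  "pat_r p = (case p of (\<sigma>, X, Y) \<Rightarrow> (rev \<sigma>, (\<lambda>x. length \<sigma> - x) ` X, Y))"

definition pat_c :: "bvpattern \<Rightarrow> bvpattern" where
  "pat_c p = (case p of (\<sigma>, X, Y) \<Rightarrow>
     (map (\<lambda>v. length \<sigma> + 1 - v) \<sigma>, X, (\<lambda>y. length \<sigma> - y) ` Y))"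

inductive_set sym_class :: "bvpattern \<Rightarrow> bvpattern set" for p :: bvpattern where
  base: "p \<in> sym_class p"
| inv: "q \<in> sym_class p \<Longrightarrow> pat_i q \<in> sym_class p"
| rev: "q \<in> sym_class p \<Longrightarrow> pat_r q \<in> sym_class p"
| comp: "q \<in> sym_class p \<Longrightarrow> pat_c q \<in> sym_class p"

end

theory Submission
  imports Defs "HOL-Combinatorics.Multiset_Permutations"
begin

text \<open>For a pattern of length 2, requiring two of the three position gaps to be adjacent pins
  the occurrence to two fixed positions, and likewise two adjacent value gaps pin its two
  values. So the permutations containing such a pattern are exactly those with two prescribed
  entries at two prescribed places, and there are (n-2)! of them: relabelling values by a
  permutation of [n] shows that all n(n-1) choices of the two entries are equally frequent.\<close>

lemma perms_eq_permutations_of_set: "perms n = permutations_of_set {1..n}"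
  by (auto simp: perms_def permutations_of_set_def distinct_card[symmetric])

definition perms_with_entries :: "'a set \<Rightarrow> nat \<Rightarrow> nat \<Rightarrow> 'a \<Rightarrow> 'a \<Rightarrow> 'a list set" where
  "perms_with_entries S i j a b = {xs \<in> permutations_of_set S. xs ! i = a \<and> xs ! j = b}"

lemma permutes_pair_exists:
  assumes "a \<in> S" "b \<in> S" "a \<noteq> b" "a' \<in> S" "b' \<in> S" "a' \<noteq> b'"
  shows "\<exists>h. h permutes S \<and> h a = a' \<and> h b = b'"
proof -
  define c where "c = transpose a a' b"
  have "c \<in> S" using assms by (simp add: c_def transpose_def)
  have "c \<noteq> a'" using assms(3) unfolding c_def by (metis transpose_apply_first transpose_eq_iff)
  define h where "h = transpose c b' \<circ> transpose a a'"
  have "h permutes S"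
    unfolding h_def using assms \<open>c \<in> S\<close> by (intro permutes_compose permutes_swap_id)
  moreover have "h a = a'" using \<open>c \<noteq> a'\<close> assms(6) by (simp add: h_def)
  moreover have "h b = b'" by (simp add: h_def c_def)
  ultimately show ?thesis by blast
qed

lemma card_perms_with_entries_le:
  assumes "i < card S" "j < card S" "a \<in> S" "b \<in> S" "a \<noteq> b" "a' \<in> S" "b' \<in> S" "a' \<noteq> b'"
  shows "card (perms_with_entries S i j a b) \<le> card (perms_with_entries S i j a' b')"
proof -
  obtain h where h: "h permutes S" "h a = a'" "h b = b'"
    using permutes_pair_exists[OF assms(3-8)] by blast
  have "map h xs \<in> perms_with_entries S i j a' b'" if "xs \<in> perms_with_entries S i j a b" for xs
  proof -
    have xs: "xs \<in> permutations_of_set S" "xs ! i = a" "xs ! j = b"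
      using that by (simp_all add: perms_with_entries_def)
    have "length xs = card S" using xs(1) by (rule length_finite_permutations_of_set)
    moreover have "map h xs \<in> permutations_of_set S"
      using xs(1) permutations_of_set_image_permutes[OF h(1)] by blast
    ultimately show ?thesis
      using assms(1,2) xs(2,3) h(2,3) by (simp add: perms_with_entries_def)
  qed
  moreover have "inj_on (map h) (perms_with_entries S i j a b)"
    using permutes_inj[OF h(1)] by (simp add: inj_on_def)
  moreover have "finite (perms_with_entries S i j a' b')"
    by (simp add: perms_with_entries_def)
  ultimately show ?thesis
    by (intro card_inj_on_le) auto
qed

lemma card_distinct_pairs:
  assumes "finite S"
  shows "card {(a, b). a \<in> S \<and> b \<in> S \<and> a \<noteq> b} = card S * (card S - 1)"
proof -
  have "{(a, b). a \<in> S \<and> b \<in> S \<and> a \<noteq> b} = S \<times> S - (\<lambda>a. (a, a)) ` S" by auto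
  moreover have "card ((\<lambda>a. (a, a)) ` S) = card S" by (simp add: card_image inj_on_def)
  ultimately show ?thesis
    using assms by (simp add: card_Diff_subset card_cartesian_product diff_mult_distrib2 image_subset_iff)
qed

lemma card_perms_with_entries:
  assumes "finite S" "i < card S" "j < card S" "i \<noteq> j" "a \<in> S" "b \<in> S" "a \<noteq> b"
  shows "card (perms_with_entries S i j a b) = fact (card S - 2)"
proof -
  define D where "D = {(a, b). a \<in> S \<and> b \<in> S \<and> a \<noteq> b}"
  define c where "c = card (perms_with_entries S i j a b)"
  have partition: "permutations_of_set S = (\<Union>d\<in>D. perms_with_entries S i j (fst d) (snd d))"
  proof safe
    fix xs assume xs: "xs \<in> permutations_of_set S"
    then have "(xs ! i, xs ! j) \<in> D"
      using assms(2-4) by (auto simp: D_def permutations_of_set_def length_finite_permutations_of_set nth_eq_iff_index_eq)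
    then show "xs \<in> (\<Union>d\<in>D. perms_with_entries S i j (fst d) (snd d))"
      using xs by (force simp: perms_with_entries_def)
  qed (auto simp: perms_with_entries_def)
  have "fact (card S) = (\<Sum>d\<in>D. card (perms_with_entries S i j (fst d) (snd d)))"
    unfolding card_permutations_of_set[OF assms(1), symmetric] partition
    by (rule card_UN_disjoint) (auto simp: perms_with_entries_def D_def
        intro: finite_subset[of _ "S \<times> S"] assms(1))
  also have "\<dots> = (\<Sum>d\<in>D. c)"
  proof (rule sum.cong)
    fix d assume "d \<in> D"
    then obtain a' b' where d: "d = (a', b')" "a' \<in> S" "b' \<in> S" "a' \<noteq> b'"
      by (auto simp: D_def)
    show "card (perms_with_entries S i j (fst d) (snd d)) = c"
      using card_perms_with_entries_le[OF assms(2,3) d(2-4) assms(5-7)]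
        card_perms_with_entries_le[OF assms(2,3) assms(5-7) d(2-4)]
      by (simp add: c_def d)
  qed simp
  also have "\<dots> = card S * (card S - 1) * c"
    using card_distinct_pairs[OF assms(1)] by (simp add: D_def)
  finally have "card S * (card S - 1) * c = fact (card S)" ..
  moreover have "fact (card S) = card S * (card S - 1) * fact (card S - 2)"
  proof -
    obtain m where "card S = Suc (Suc m)"
      using assms(2-4) by (intro that[of "card S - 2"]) simp
    then show ?thesis by (simp add: fact_Suc algebra_simps)
  qed
  moreover have "card S * (card S - 1) > 0"
    using assms(2-4) by simp
  ultimately show ?thesis by (simp add: c_def)
qed

definition adjacent2 :: "nat set \<Rightarrow> nat \<Rightarrow> (nat \<Rightarrow> nat) \<Rightarrow> bool" where
  "adjacent2 X n f \<longleftrightarrow> (\<forall>x\<in>X. ext 2 n f (x + 1) = ext 2 n f x + 1)"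

lemma contains_length2_iff:
  assumes "length \<sigma> = 2"
  shows "contains \<pi> (\<sigma>, X, Y) \<longleftrightarrow> (\<exists>i. 1 \<le> i 1 \<and> i 1 < i 2 \<and> i 2 \<le> length \<pi> \<and>
     (\<pi> ! (i 1 - 1) < \<pi> ! (i 2 - 1) \<longleftrightarrow> \<sigma> ! 0 < \<sigma> ! 1) \<and>
     (\<pi> ! (i 2 - 1) < \<pi> ! (i 1 - 1) \<longleftrightarrow> \<sigma> ! 1 < \<sigma> ! 0) \<and>
     adjacent2 X (length \<pi>) i \<and>
     adjacent2 Y (length \<pi>) (\<lambda>t. sort [\<pi> ! (i 1 - 1), \<pi> ! (i 2 - 1)] ! (t - 1)))"
proof -
  have pairs: "(\<forall>a b. 1 \<le> a \<longrightarrow> a < b \<longrightarrow> b \<le> (2::nat) \<longrightarrow> P a b) \<longleftrightarrow> P 1 2" for P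
    by (auto simp: le_Suc_eq less_Suc_eq numeral_2_eq_2)
  have "[1..<2+1] = [1, 2::nat]" "{1..2::nat} = {1, 2}" by (auto simp: upt_rec)
  then show ?thesis
    unfolding contains_def adjacent2_def prod.case Let_def assms pairs
    by (auto simp: numeral_2_eq_2)
qed

text \<open>Gap x of an occurrence of a length-2 pattern lies between its x-th and (x+1)-th entry,
  with the sentinels 0 and n+1 supplied by ext.\<close>

definition pinning :: "nat set \<Rightarrow> bool" where
  "pinning X \<longleftrightarrow> X = {0, 1} \<or> X = {1, 2} \<or> X = {0, 2}"

definition pins :: "nat set \<Rightarrow> nat \<Rightarrow> nat \<times> nat" where
  "pins X n = (if X = {0, 1} then (1, 2) else if X = {1, 2} then (n - 1, n) else (1, n))"

lemma pinning_cases: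
  assumes "pinning X"
  obtains "X = {0, 1}" "pins X n = (1, 2)"
    | "X = {1, 2}" "pins X n = (n - 1, n)"
    | "X = {0, 2}" "pins X n = (1, n)"
proof -
  have "({0, 1}::nat set) \<noteq> {1, 2}" "({0, 1}::nat set) \<noteq> {0, 2}" "({1, 2}::nat set) \<noteq> {0, 2}"
    by (simp_all add: insert_eq_iff)
  then show ?thesis using assms that by (auto simp: pinning_def pins_def)
qed

lemma pins_bounds:
  assumes "pinning X" "2 \<le> n" "pins X n = (u, v)"
  shows "1 \<le> u \<and> u < v \<and> v \<le> n"
  using assms(2,3) by (cases rule: pinning_cases[OF assms(1), of n]) auto

lemma adjacent2_iff_pins:
  assumes "pinning X" "1 \<le> f 1" "f 1 < f 2" "f 2 \<le> n"
  shows "adjacent2 X n f \<longleftrightarrow> (f 1, f 2) = pins X n"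
  using assms(2-4)
  by (cases rule: pinning_cases[OF assms(1), of n])
     (auto simp: adjacent2_def ext_def numeral_2_eq_2)

definition orient :: "nat list \<Rightarrow> nat \<times> nat \<Rightarrow> nat \<times> nat" where
  "orient \<sigma> uv = (if \<sigma> = [1, 2] then uv else prod.swap uv)"

lemma contains_pinned_iff:
  assumes \<pi>: "\<pi> \<in> perms n" and n: "2 \<le> n" and \<sigma>: "\<sigma> = [1, 2] \<or> \<sigma> = [2, 1]"
    and X: "pinning X" and Y: "pinning Y"
  shows "contains \<pi> (\<sigma>, X, Y) \<longleftrightarrow>
    (\<pi> ! (fst (pins X n) - 1), \<pi> ! (snd (pins X n) - 1)) = orient \<sigma> (pins Y n)"
proof -
  obtain p1 p2 where p: "pins X n = (p1, p2)" by fastforce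
  obtain v1 v2 where v: "pins Y n = (v1, v2)" by fastforce
  note p_bounds = pins_bounds[OF X n p] and v_bounds = pins_bounds[OF Y n v]
  define u1 u2 where "u1 = \<pi> ! (p1 - 1)" and "u2 = \<pi> ! (p2 - 1)"
  have len: "length \<pi> = n" using \<pi> by (simp add: perms_def)
  have len\<sigma>: "length \<sigma> = 2" using \<sigma> by auto
  have u_range: "u1 \<in> {1..n}" "u2 \<in> {1..n}" and "u1 \<noteq> u2"
    using \<pi> p_bounds by (auto simp: u1_def u2_def perms_def nth_eq_iff_index_eq dest!: nth_mem)
  have "contains \<pi> (\<sigma>, X, Y) \<longleftrightarrow> (u1 < u2 \<longleftrightarrow> \<sigma> ! 0 < \<sigma> ! 1) \<and> (u2 < u1 \<longleftrightarrow> \<sigma> ! 1 < \<sigma> ! 0) \<and>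
      adjacent2 Y n (\<lambda>t. sort [u1, u2] ! (t - 1))"
  proof
    assume "contains \<pi> (\<sigma>, X, Y)"
    then obtain i where "1 \<le> i 1" "i 1 < i 2" "i 2 \<le> n" and "adjacent2 X n i"
      and rest: "(\<pi> ! (i 1 - 1) < \<pi> ! (i 2 - 1) \<longleftrightarrow> \<sigma> ! 0 < \<sigma> ! 1)"
        "(\<pi> ! (i 2 - 1) < \<pi> ! (i 1 - 1) \<longleftrightarrow> \<sigma> ! 1 < \<sigma> ! 0)"
        "adjacent2 Y n (\<lambda>t. sort [\<pi> ! (i 1 - 1), \<pi> ! (i 2 - 1)] ! (t - 1))"
      unfolding contains_length2_iff[OF len\<sigma>] len by blast
    then have "i 1 = p1" "i 2 = p2" using adjacent2_iff_pins[OF X] p by auto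
    then show "(u1 < u2 \<longleftrightarrow> \<sigma> ! 0 < \<sigma> ! 1) \<and> (u2 < u1 \<longleftrightarrow> \<sigma> ! 1 < \<sigma> ! 0) \<and>
      adjacent2 Y n (\<lambda>t. sort [u1, u2] ! (t - 1))"
      using rest by (simp add: u1_def u2_def)
  next
    assume "(u1 < u2 \<longleftrightarrow> \<sigma> ! 0 < \<sigma> ! 1) \<and> (u2 < u1 \<longleftrightarrow> \<sigma> ! 1 < \<sigma> ! 0) \<and>
      adjacent2 Y n (\<lambda>t. sort [u1, u2] ! (t - 1))"
    moreover have "adjacent2 X n (\<lambda>a. if a = 1 then p1 else p2)"
      using adjacent2_iff_pins[OF X] p p_bounds by simp
    ultimately show "contains \<pi> (\<sigma>, X, Y)"
      using p_bounds unfolding contains_length2_iff[OF len\<sigma>] len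
      by (intro exI[of _ "\<lambda>a. if a = 1 then p1 else p2"]) (auto simp: u1_def u2_def)
  qed
  also have "\<dots> \<longleftrightarrow> (u1, u2) = orient \<sigma> (v1, v2)"
  proof -
    have "adjacent2 Y n (\<lambda>t. sort [u1, u2] ! (t - 1)) \<longleftrightarrow> (min u1 u2, max u1 u2) = (v1, v2)"
      using adjacent2_iff_pins[OF Y] u_range \<open>u1 \<noteq> u2\<close> v by auto
    with \<open>u1 \<noteq> u2\<close> v_bounds show ?thesis
      using \<sigma> by (elim disjE) (auto simp: orient_def min_def max_def)
  qed
  finally show ?thesis by (simp add: p v u1_def u2_def)
qed

definition pinned_pattern :: "bvpattern \<Rightarrow> bool" where
  "pinned_pattern q \<longleftrightarrow>
     (case q of (\<sigma>, X, Y) \<Rightarrow> (\<sigma> = [1, 2] \<or> \<sigma> = [2, 1]) \<and> pinning X \<and> pinning Y)"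

lemma avoiders_pinned_pattern:
  assumes "pinned_pattern p" "2 \<le> n"
  shows "avoiders n p = fact n - fact (n - 2)"
proof -
  obtain \<sigma> X Y where p: "p = (\<sigma>, X, Y)" by (cases p)
  have \<sigma>: "\<sigma> = [1, 2] \<or> \<sigma> = [2, 1]" and X: "pinning X" and Y: "pinning Y"
    using assms(1) by (auto simp: p pinned_pattern_def)
  obtain p1 p2 where pX: "pins X n = (p1, p2)" by fastforce
  obtain v1 v2 where pY: "pins Y n = (v1, v2)" by fastforce
  obtain a b where ab: "orient \<sigma> (v1, v2) = (a, b)" by fastforce
  have "1 \<le> p1" "p1 < p2" "p2 \<le> n" using pins_bounds[OF X assms(2) pX] by auto
  moreover have "a \<in> {1..n}" "b \<in> {1..n}" "a \<noteq> b"
    using pins_bounds[OF Y assms(2) pY] ab by (auto simp: orient_def split: if_splits)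
  ultimately have "card (perms_with_entries {1..n} (p1 - 1) (p2 - 1) a b) = fact (n - 2)"
    by (subst card_perms_with_entries) auto
  moreover have "{\<pi> \<in> perms n. contains \<pi> p} = perms_with_entries {1..n} (p1 - 1) (p2 - 1) a b"
    using contains_pinned_iff[OF _ assms(2) \<sigma> X Y] pX pY ab
    by (auto simp: p perms_with_entries_def perms_eq_permutations_of_set)
  ultimately have contained: "card {\<pi> \<in> perms n. contains \<pi> p} = fact (n - 2)"
    by simp
  have "{\<pi> \<in> perms n. \<not> contains \<pi> p} = perms n - {\<pi> \<in> perms n. contains \<pi> p}"
    by blast
  then have "avoiders n p = card (perms n) - card {\<pi> \<in> perms n. contains \<pi> p}"
    unfolding avoiders_def by (simp add: card_Diff_subset perms_eq_permutations_of_set)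
  then show ?thesis
    using contained by (simp add: perms_eq_permutations_of_set)
qed

lemma perm_inv_length2: "perm_inv [1, 2] = [1, 2]" "perm_inv [2, 1] = [2, 1]"
  unfolding perm_inv_def by (auto simp: upt_rec numeral_2_eq_2 less_Suc_eq intro!: Least_equality)

lemma pinning_reflect: "pinning X \<Longrightarrow> pinning ((\<lambda>x. 2 - x) ` X)"
  unfolding pinning_def by (elim disjE) (simp_all add: insert_commute)

lemma pinned_pattern_symmetries:
  assumes "pinned_pattern q"
  shows "pinned_pattern (pat_i q)" "pinned_pattern (pat_r q)" "pinned_pattern (pat_c q)"
proof -
  obtain \<sigma> X Y where q: "q = (\<sigma>, X, Y)" by (cases q)
  have \<sigma>: "\<sigma> = [1, 2] \<or> \<sigma> = [2, 1]" and "pinning X" "pinning Y"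
    using assms by (auto simp: q pinned_pattern_def)
  moreover have "length \<sigma> = 2" using \<sigma> by auto
  ultimately show "pinned_pattern (pat_i q)" "pinned_pattern (pat_r q)" "pinned_pattern (pat_c q)"
    using pinning_reflect perm_inv_length2
    by (auto simp: q pinned_pattern_def pat_i_def pat_r_def pat_c_def simp del: One_nat_def)
qed

lemma pinned_pattern_sym_class:
  "q \<in> sym_class p \<Longrightarrow> pinned_pattern p \<Longrightarrow> pinned_pattern q"
  by (induction rule: sym_class.induct) (use pinned_pattern_symmetries in auto)

theorem mainTheorem5:
  fixes p :: bvpattern and n :: nat
  assumes "p \<in> sym_class ([1,2], {0,1}, {0,1}) \<union> sym_class ([1,2], {0,1}, {0,2})
             \<union> sym_class ([1,2], {0,1}, {1,2}) \<union> sym_class ([1,2], {0,2}, {0,2})"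
    and "n > 1"
  shows "avoiders n p = fact n - fact (n - 2)"
proof -
  have "pinned_pattern ([1,2], {0,1}, {0,1})" "pinned_pattern ([1,2], {0,1}, {0,2})"
    "pinned_pattern ([1,2], {0,1}, {1,2})" "pinned_pattern ([1,2], {0,2}, {0,2})"
    by (simp_all add: pinned_pattern_def pinning_def)
  then have "pinned_pattern p"
    using assms(1) pinned_pattern_sym_class by blast
  then show ?thesis
    using avoiders_pinned_pattern assms(2) by simp
qed

end
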